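(* Let $s\ge 2$ and $R\ge 1$ be integers. The following are equivalent: (i) $\mathrm{Perf}(s,R,R)\neq\emptyset$; (ii) $\mathrm{Perf}(s,r,R)\neq\emptyset$ for some integer $r>R$; (iii) $\mathrm{Perf}(s,r,R)\neq\emptyset$ for every integer $r>R$.
   Context: $q$ is a prime power, $\mathbb F_q^{s\times n}$ the set of $s\times n$ matrices over $\mathbb F_q$ with rows in $\mathbb F_q^{1\times n}$. For a row $y=(y_1,\dots,y_n)$, the NRT weight is $w(y)=\max\{j: y_j\neq 0\}$ if $y\ne0$ and $w(0)=0$; for a matrix, $w(x)=\sum_i w(x_i)$. The NRT metric is $d(x,y)=w(x-y)$; $B(c,R)=\{x: d(x,c)\le R\}$. A code $C\subseteq\mathbb F_q^{s\times n}$ is $R$-perfect if the balls $B(c,R)$, $c\in C$, are pairwise disjoint and cover $\mathbb F_q^{s\times n}$; non-trivial means $|C|>1$ and $C\ne\mathbb F_q^{s\times n}$. $\mathrm{Perf}(s,n,R)$ denotes the set of non-trivial $R$-perfect codes in $\mathbb F_q^{s\times n}$ (for the fixed $q$). *)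

theory Defs
  imports Main
begin

text \<open>The ambient field F_q is modelled by a type variable of sort {finite, field}:
  these are exactly the finite fields, i.e. F_q for q a prime power.
  An s x n matrix is a function nat => nat => 'a vanishing outside rows 0..s-1 and
  columns 0..n-1 (column j here is column j+1 of the paper).\<close>

type_synonym 'a mat = "nat \<Rightarrow> nat \<Rightarrow> 'a"

definition mat_space :: "nat \<Rightarrow> nat \<Rightarrow> ('a::{finite,field}) mat set" where
  "mat_space s n = {x. \<forall>i j. (s \<le> i \<or> n \<le> j) \<longrightarrow> x i j = 0}"

definition row_wt :: "nat \<Rightarrow> (nat \<Rightarrow> 'a::{finite,field}) \<Rightarrow> nat" where
  "row_wt n y = (if (\<forall>j<n. y j = 0) then 0 else Suc (Max {j. j < n \<and> y j \<noteq> 0}))"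

definition nrt_wt :: "nat \<Rightarrow> nat \<Rightarrow> ('a::{finite,field}) mat \<Rightarrow> nat" where
  "nrt_wt s n x = (\<Sum>i<s. row_wt n (x i))"

definition nrt_dist :: "nat \<Rightarrow> nat \<Rightarrow> ('a::{finite,field}) mat \<Rightarrow> 'a mat \<Rightarrow> nat" where
  "nrt_dist s n x y = nrt_wt s n (\<lambda>i j. x i j - y i j)"

definition nrt_ball :: "nat \<Rightarrow> nat \<Rightarrow> ('a::{finite,field}) mat \<Rightarrow> nat \<Rightarrow> 'a mat set" where
  "nrt_ball s n c R = {x \<in> mat_space s n. nrt_dist s n x c \<le> R}"

definition perfect_code :: "nat \<Rightarrow> nat \<Rightarrow> nat \<Rightarrow> ('a::{finite,field}) mat set \<Rightarrow> bool" where
  "perfect_code s n R C \<longleftrightarrow> C \<subseteq> mat_space s n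
     \<and> (\<forall>c\<in>C. \<forall>c'\<in>C. c \<noteq> c' \<longrightarrow> nrt_ball s n c R \<inter> nrt_ball s n c' R = {})
     \<and> (\<Union>c\<in>C. nrt_ball s n c R) = mat_space s n"

definition Perf :: "nat \<Rightarrow> nat \<Rightarrow> nat \<Rightarrow> ('a::{finite,field}) mat set set" where
  "Perf s n R = {C. perfect_code s n R C \<and> 1 < card C \<and> C \<noteq> mat_space s n}"

end

theory Submission
  imports Defs
begin

text \<open>For \<open>R \<le> n \<le> r\<close>, any nonzero entry of \<open>x - c\<close> in a column \<open>j \<ge> n\<close> already gives
  \<open>d(x, c) > R\<close>. Hence an \<open>R\<close>-ball in \<open>F\<^sup>s\<^sup>\<times>\<^sup>r\<close> is an \<open>R\<close>-ball in the first \<open>n\<close> columns with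
  the remaining columns frozen to those of the centre. Consequently a perfect code in
  \<open>F\<^sup>s\<^sup>\<times>\<^sup>n\<close> lifts to \<open>F\<^sup>s\<^sup>\<times>\<^sup>r\<close> by allowing arbitrary tails, and conversely the codewords of a
  perfect code in \<open>F\<^sup>s\<^sup>\<times>\<^sup>r\<close> sharing one fixed tail restrict to a perfect code in \<open>F\<^sup>s\<^sup>\<times>\<^sup>n\<close>.
  Taking \<open>n = R\<close>, non-triviality is automatic on both sides as soon as \<open>0 < R < s n\<close>.\<close>

definition mat_trunc :: "nat \<Rightarrow> ('a::{finite,field}) mat \<Rightarrow> 'a mat" where
  "mat_trunc n x = (\<lambda>i j. if j < n then x i j else 0)"

definition mat_glue :: "nat \<Rightarrow> ('a::{finite,field}) mat \<Rightarrow> 'a mat \<Rightarrow> 'a mat" where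
  "mat_glue n y c = (\<lambda>i j. if j < n then y i j else c i j)"

lemma row_wt_le_iff: "row_wt n y \<le> k \<longleftrightarrow> (\<forall>j<n. k \<le> j \<longrightarrow> y j = 0)"
proof (cases "\<forall>j<n. y j = 0")
  case False
  let ?S = "{j. j < n \<and> y j \<noteq> 0}"
  have "Max ?S \<in> ?S" using False by (intro Max_in) auto
  moreover have "j \<le> Max ?S" if "j \<in> ?S" for j using that by (intro Max_ge) auto
  ultimately show ?thesis
    using False unfolding row_wt_def by (auto simp: Suc_le_eq)
qed (simp add: row_wt_def)

lemma row_wt_ge: "j < n \<Longrightarrow> y j \<noteq> 0 \<Longrightarrow> Suc j \<le> row_wt n y"
  using row_wt_le_iff[of n y j] by auto

lemma row_wt_zero [simp]: "row_wt n (\<lambda>_. 0) = 0"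
  by (simp add: row_wt_def)

lemma row_wt_cong:
  assumes "\<And>j. j < n \<Longrightarrow> y j = y' j"
  shows "row_wt n y = row_wt n y'"
proof -
  have "{j. j < n \<and> y j \<noteq> 0} = {j. j < n \<and> y' j \<noteq> 0}" using assms by auto
  then show ?thesis using assms by (simp add: row_wt_def)
qed

lemma row_wt_restrict:
  assumes "n \<le> r" and "\<And>j. n \<le> j \<Longrightarrow> j < r \<Longrightarrow> y j = 0"
  shows "row_wt r y = row_wt n y"
proof -
  have "j < n" if "j < r" "y j \<noteq> 0" for j
    using assms(2) that not_less by blast
  then have "{j. j < r \<and> y j \<noteq> 0} = {j. j < n \<and> y j \<noteq> 0}"
    "(\<forall>j<r. y j = 0) \<longleftrightarrow> (\<forall>j<n. y j = 0)"
    using assms(1) by auto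
  then show ?thesis unfolding row_wt_def by simp
qed

lemma nrt_dist_le_imp_eq:
  assumes "nrt_dist s r x y \<le> R" "i < s" "R \<le> j" "j < r"
  shows "x i j = y i j"
proof -
  have "row_wt r (\<lambda>j. x i j - y i j) \<le> nrt_dist s r x y"
    unfolding nrt_dist_def nrt_wt_def using assms(2) by (intro member_le_sum) auto
  then show ?thesis using assms unfolding row_wt_le_iff by auto
qed

lemma nrt_dist_restrict:
  assumes "n \<le> r" and "\<And>i j. i < s \<Longrightarrow> n \<le> j \<Longrightarrow> j < r \<Longrightarrow> x i j = y i j"
  shows "nrt_dist s r x y = nrt_dist s n x y"
  unfolding nrt_dist_def nrt_wt_def using assms by (intro sum.cong refl row_wt_restrict) auto

lemma nrt_dist_cong:
  "(\<And>i j. i < s \<Longrightarrow> j < n \<Longrightarrow> x i j - y i j = x' i j - y' i j)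
   \<Longrightarrow> nrt_dist s n x y = nrt_dist s n x' y'"
  unfolding nrt_dist_def nrt_wt_def by (intro sum.cong refl row_wt_cong) auto

lemma nrt_dist_self [simp]: "nrt_dist s n x x = 0"
  by (simp add: nrt_dist_def nrt_wt_def)

lemma finite_mat_space: "finite (mat_space s n :: ('a::{finite,field}) mat set)"
proof -
  let ?F = "{f :: nat \<times> nat \<Rightarrow> 'a. \<forall>p. (p \<in> {..<s} \<times> {..<n} \<longrightarrow> f p \<in> UNIV)
    \<and> (p \<notin> {..<s} \<times> {..<n} \<longrightarrow> f p = 0)}"
  have "finite ?F" by (intro finite_set_of_finite_funs) auto
  moreover have "mat_space s n \<subseteq> curry ` ?F"
  proof
    fix x :: "'a mat" assume "x \<in> mat_space s n"
    then have "case_prod x \<in> ?F" unfolding mat_space_def by (auto simp: not_less)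
    then show "x \<in> curry ` ?F" by (rule image_eqI[rotated]) simp
  qed
  ultimately show ?thesis by (meson finite_imageI finite_subset)
qed

lemma mat_spaceD: "x \<in> mat_space s n \<Longrightarrow> s \<le> i \<or> n \<le> j \<Longrightarrow> x i j = 0"
  unfolding mat_space_def by blast

lemma zero_in_mat_space: "(\<lambda>_ _. 0) \<in> mat_space s n"
  by (simp add: mat_space_def)

lemma mat_trunc_in_mat_space: "x \<in> mat_space s r \<Longrightarrow> mat_trunc n x \<in> mat_space s n"
  by (auto simp: mat_space_def mat_trunc_def)

lemma mat_glue_in_mat_space:
  "y \<in> mat_space s n \<Longrightarrow> c \<in> mat_space s r \<Longrightarrow> n \<le> r \<Longrightarrow> mat_glue n y c \<in> mat_space s r"
  by (auto simp: mat_space_def mat_glue_def)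

lemma mat_trunc_glue:
  assumes "y \<in> mat_space s n"
  shows "mat_trunc n (mat_glue n y c) = y"
proof (intro ext)
  fix i j show "mat_trunc n (mat_glue n y c) i j = y i j"
    using mat_spaceD[OF assms, of i j] by (simp add: mat_trunc_def mat_glue_def)
qed

lemma mat_glue_glue [simp]: "mat_glue n y (mat_glue n a c) = mat_glue n y c"
  by (intro ext) (simp add: mat_glue_def)

lemma mat_glue_trunc [simp]: "mat_glue n (mat_trunc n x) x = x"
  by (intro ext) (simp add: mat_trunc_def mat_glue_def)

lemma nrt_ball_glue:
  fixes c :: "('a::{finite,field}) mat"
  assumes "R \<le> n" "n \<le> r" "c \<in> mat_space s r"
  shows "nrt_ball s r c R = (\<lambda>y. mat_glue n y c) ` nrt_ball s n (mat_trunc n c) R"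
proof -
  have dist_glue: "nrt_dist s r (mat_glue n y c) c = nrt_dist s n y (mat_trunc n c)" for y
  proof -
    have "nrt_dist s r (mat_glue n y c) c = nrt_dist s n (mat_glue n y c) c"
      by (rule nrt_dist_restrict[OF assms(2)]) (simp add: mat_glue_def)
    also have "\<dots> = nrt_dist s n y (mat_trunc n c)"
      by (rule nrt_dist_cong) (simp add: mat_glue_def mat_trunc_def)
    finally show ?thesis .
  qed
  have "x \<in> (\<lambda>y. mat_glue n y c) ` nrt_ball s n (mat_trunc n c) R"
    if x: "x \<in> nrt_ball s r c R" for x
  proof -
    have tail: "x i j = c i j" if "n \<le> j" for i j
    proof (cases "i < s \<and> j < r")
      case True then show ?thesis
        using x \<open>n \<le> j\<close> assms(1) nrt_dist_le_imp_eq[of s r x c R i j]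
        by (simp add: nrt_ball_def)
    next
      case False
      then have "s \<le> i \<or> r \<le> j" by auto
      then show ?thesis
        using x assms(3) mat_spaceD[of x s r i j] mat_spaceD[of c s r i j]
        by (simp add: nrt_ball_def)
    qed
    have x_eq: "mat_glue n (mat_trunc n x) c = x"
      by (intro ext) (simp add: mat_glue_def mat_trunc_def tail)
    have "mat_trunc n x \<in> nrt_ball s n (mat_trunc n c) R"
      using x dist_glue[of "mat_trunc n x"] mat_trunc_in_mat_space[of x s r n]
      unfolding x_eq by (simp add: nrt_ball_def)
    with x_eq show ?thesis by (metis image_eqI)
  qed
  moreover have "mat_glue n y c \<in> nrt_ball s r c R" if "y \<in> nrt_ball s n (mat_trunc n c) R" for y
    using that assms dist_glue[of y] by (simp add: nrt_ball_def mat_glue_in_mat_space)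
  ultimately show ?thesis by blast
qed

lemma perfect_code_nonempty: "perfect_code s n R C \<Longrightarrow> C \<noteq> {}"
  using zero_in_mat_space[of s n] unfolding perfect_code_def by auto

lemma perfect_code_lift:
  fixes C :: "('a::{finite,field}) mat set"
  assumes C: "perfect_code s n R C" and "R \<le> n" "n \<le> r"
  shows "perfect_code s r R {x \<in> mat_space s r. mat_trunc n x \<in> C}"
    (is "perfect_code s r R ?C'")
proof -
  have ball: "nrt_ball s r c R = (\<lambda>y. mat_glue n y c) ` nrt_ball s n (mat_trunc n c) R"
    if "c \<in> ?C'" for c
    using that assms nrt_ball_glue by blast
  have Csub: "C \<subseteq> mat_space s n"
    and disj: "\<And>a b. a \<in> C \<Longrightarrow> b \<in> C \<Longrightarrow> a \<noteq> b \<Longrightarrow> nrt_ball s n a R \<inter> nrt_ball s n b R = {}"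
    and cov: "(\<Union>a\<in>C. nrt_ball s n a R) = mat_space s n"
    using C unfolding perfect_code_def by auto
  have "nrt_ball s r c R \<inter> nrt_ball s r c' R = {}"
    if c: "c \<in> ?C'" and c': "c' \<in> ?C'" and "c \<noteq> c'" for c c'
  proof (rule ccontr)
    assume "nrt_ball s r c R \<inter> nrt_ball s r c' R \<noteq> {}"
    then obtain y y' where y: "y \<in> nrt_ball s n (mat_trunc n c) R"
      and y': "y' \<in> nrt_ball s n (mat_trunc n c') R"
      and eq: "mat_glue n y c = mat_glue n y' c'"
      unfolding ball[OF c] ball[OF c'] by blast
    have "y \<in> mat_space s n" "y' \<in> mat_space s n"
      using y y' by (simp_all add: nrt_ball_def)
    then have "y = y'"
      using arg_cong[OF eq, of "mat_trunc n"] by (simp add: mat_trunc_glue)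
    have tails: "c i j = c' i j" if "n \<le> j" for i j
      using fun_cong[OF fun_cong[OF eq, of i], of j] that by (simp add: mat_glue_def)
    have "mat_trunc n c \<noteq> mat_trunc n c'"
    proof
      assume heads: "mat_trunc n c = mat_trunc n c'"
      have "c i j = c' i j" for i j
        using tails[of j i] fun_cong[OF fun_cong[OF heads, of i], of j]
        by (cases "n \<le> j") (auto simp: mat_trunc_def)
      then show False using \<open>c \<noteq> c'\<close> by blast
    qed
    then show False using disj[of "mat_trunc n c" "mat_trunc n c'"] c c' y y' \<open>y = y'\<close> by blast
  qed
  moreover have "x \<in> (\<Union>c\<in>?C'. nrt_ball s r c R)" if x: "x \<in> mat_space s r" for x
  proof -
    obtain a where a: "a \<in> C" "mat_trunc n x \<in> nrt_ball s n a R"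
      using cov mat_trunc_in_mat_space[OF x] by blast
    have head: "mat_trunc n (mat_glue n a x) = a"
      using a Csub by (blast intro: mat_trunc_glue)
    have c: "mat_glue n a x \<in> ?C'"
      using a Csub x assms head by (auto intro: mat_glue_in_mat_space)
    have "x = mat_glue n (mat_trunc n x) (mat_glue n a x)"
      by (simp add: mat_glue_def mat_trunc_def fun_eq_iff)
    then have "x \<in> nrt_ball s r (mat_glue n a x) R"
      unfolding ball[OF c] head using a(2) by blast
    with c show ?thesis by blast
  qed
  ultimately show ?thesis unfolding perfect_code_def nrt_ball_def by blast
qed

lemma perfect_code_restrict:
  fixes C' :: "('a::{finite,field}) mat set"
  assumes C': "perfect_code s r R C'" and "R \<le> n" "n \<le> r" and c0: "c0 \<in> C'"
  shows "perfect_code s n R {y \<in> mat_space s n. mat_glue n y c0 \<in> C'}"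
    (is "perfect_code s n R ?C")
proof -
  have C'sub: "C' \<subseteq> mat_space s r"
    and disj': "\<And>a b. a \<in> C' \<Longrightarrow> b \<in> C' \<Longrightarrow> a \<noteq> b \<Longrightarrow> nrt_ball s r a R \<inter> nrt_ball s r b R = {}"
    and cov': "(\<Union>a\<in>C'. nrt_ball s r a R) = mat_space s r"
    using C' unfolding perfect_code_def by auto
  have c0_mat: "c0 \<in> mat_space s r" using c0 C'sub by blast
  have ball: "nrt_ball s r c R = (\<lambda>y. mat_glue n y c) ` nrt_ball s n (mat_trunc n c) R"
    if "c \<in> C'" for c
    using that C'sub assms nrt_ball_glue by blast
  have glue_in_ball: "mat_glue n y c0 \<in> nrt_ball s r (mat_glue n a c0) R"
    if "a \<in> ?C" "y \<in> nrt_ball s n a R" for a y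
    using that ball[of "mat_glue n a c0"] by (auto simp: mat_trunc_glue)
  have "nrt_ball s n a R \<inter> nrt_ball s n b R = {}" if a: "a \<in> ?C" and b: "b \<in> ?C" and "a \<noteq> b" for a b
  proof -
    have "mat_glue n a c0 \<noteq> mat_glue n b c0"
      using a b \<open>a \<noteq> b\<close> by (metis (no_types, lifting) mem_Collect_eq mat_trunc_glue)
    then show ?thesis using disj' a b glue_in_ball by blast
  qed
  moreover have "y \<in> (\<Union>a\<in>?C. nrt_ball s n a R)" if y: "y \<in> mat_space s n" for y
  proof -
    obtain c where c: "c \<in> C'" "mat_glue n y c0 \<in> nrt_ball s r c R"
      using cov' mat_glue_in_mat_space[OF y c0_mat \<open>n \<le> r\<close>] by blast
    then obtain y' where y': "y' \<in> nrt_ball s n (mat_trunc n c) R"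
      and eq: "mat_glue n y c0 = mat_glue n y' c"
      using ball by blast
    have "y' \<in> mat_space s n" using y' by (simp add: nrt_ball_def)
    then have "y = y'"
      using arg_cong[OF eq, of "mat_trunc n"] y by (simp add: mat_trunc_glue)
    have "mat_glue n (mat_trunc n c) c0 = mat_glue n (mat_trunc n c) c"
      using eq by (simp add: mat_glue_def fun_eq_iff) metis
    then have "mat_trunc n c \<in> ?C"
      using c(1) C'sub mat_trunc_in_mat_space[of c s r n] by auto
    with y' \<open>y = y'\<close> show ?thesis by blast
  qed
  ultimately show ?thesis unfolding perfect_code_def nrt_ball_def by blast
qed

lemma perfect_code_in_Perf:
  fixes C :: "('a::{finite,field}) mat set"
  assumes C: "perfect_code s n R C" and "0 < R" "R < s * n"
  shows "C \<in> Perf s n R"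
proof -
  have Csub: "C \<subseteq> mat_space s n"
    and disj: "\<And>a b. a \<in> C \<Longrightarrow> b \<in> C \<Longrightarrow> a \<noteq> b \<Longrightarrow> nrt_ball s n a R \<inter> nrt_ball s n b R = {}"
    and cov: "(\<Union>a\<in>C. nrt_ball s n a R) = mat_space s n"
    using C unfolding perfect_code_def by auto
  obtain c where c: "c \<in> C" using perfect_code_nonempty[OF C] by blast
  have c_mat: "c \<in> mat_space s n" using c Csub by blast
  have "0 < s * n" using \<open>R < s * n\<close> by linarith
  then have "0 < s" "0 < n" by simp_all
  define far where "far = (\<lambda>i j. c i j + (if i < s \<and> j = n - 1 then 1 else (0::'a)))"
  have "far \<in> mat_space s n"
    using c_mat \<open>0 < n\<close> by (auto simp: far_def mat_space_def)
  then obtain c' where c': "c' \<in> C" "nrt_dist s n far c' \<le> R"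
    using cov by (auto simp: nrt_ball_def)
  have "(\<Sum>i<s. n) \<le> (\<Sum>i<s. row_wt n (\<lambda>j. far i j - c i j))"
    using \<open>0 < n\<close> row_wt_ge[of "n - 1" n "\<lambda>j. if j = n - 1 then 1 else 0"]
    by (intro sum_mono) (simp add: far_def)
  then have "s * n \<le> nrt_dist s n far c" by (simp add: nrt_dist_def nrt_wt_def)
  then have "c' \<noteq> c" using c' \<open>R < s * n\<close> by auto
  moreover have "finite C" using Csub finite_mat_space finite_subset by blast
  ultimately have "card {c, c'} \<le> card C" using c c' by (intro card_mono) auto
  then have card: "1 < card C" using \<open>c' \<noteq> c\<close> by simp
  define near where "near = (\<lambda>i j. c i j + (if i = 0 \<and> j = 0 then 1 else (0::'a)))"
  have near_mat: "near \<in> mat_space s n"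
    using c_mat \<open>0 < s\<close> \<open>0 < n\<close> by (auto simp: near_def mat_space_def)
  have "(\<Sum>i<s. row_wt n (\<lambda>j. near i j - c i j)) \<le> (\<Sum>i<s. if i = 0 then 1 else 0)"
    by (intro sum_mono) (simp add: near_def row_wt_le_iff)
  then have "nrt_dist s n near c \<le> R"
    using \<open>0 < s\<close> \<open>0 < R\<close> by (simp add: nrt_dist_def nrt_wt_def)
  then have "near \<in> nrt_ball s n c R \<inter> nrt_ball s n near R"
    using near_mat by (simp add: nrt_ball_def)
  moreover have "near \<noteq> c" by (auto simp: near_def fun_eq_iff)
  ultimately have "near \<notin> C" using disj c by blast
  with near_mat have "C \<noteq> mat_space s n" by blast
  with C card show ?thesis by (simp add: Perf_def)
qed

theorem mainTheorem12:
  fixes s R :: nat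
  assumes "2 \<le> s" and "1 \<le> R"
  shows "((Perf s R R :: ('a::{finite,field}) mat set set) \<noteq> {}
            \<longleftrightarrow> (\<exists>r. R < r \<and> (Perf s r R :: 'a mat set set) \<noteq> {}))
       \<and> ((\<exists>r. R < r \<and> (Perf s r R :: 'a mat set set) \<noteq> {})
            \<longleftrightarrow> (\<forall>r. R < r \<longrightarrow> (Perf s r R :: 'a mat set set) \<noteq> {}))"
proof -
  have lift: "(Perf s r R :: 'a mat set set) \<noteq> {}"
    if nonempty: "(Perf s R R :: 'a mat set set) \<noteq> {}" and "R < r" for r
  proof -
    obtain C :: "'a mat set" where "perfect_code s R R C"
      using nonempty by (auto simp: Perf_def)
    then have "perfect_code s r R {x \<in> mat_space s r. mat_trunc R x \<in> C}"
      using \<open>R < r\<close> by (simp add: perfect_code_lift)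
    moreover have "R < s * r"
      using assms \<open>R < r\<close> by (simp add: less_le_trans)
    ultimately have "{x \<in> mat_space s r. mat_trunc R x \<in> C} \<in> Perf s r R"
      using assms by (simp add: perfect_code_in_Perf)
    then show ?thesis by blast
  qed
  have restrict: "(Perf s R R :: 'a mat set set) \<noteq> {}"
    if nonempty: "(Perf s r R :: 'a mat set set) \<noteq> {}" and "R < r" for r
  proof -
    obtain C' :: "'a mat set" where C': "perfect_code s r R C'"
      using nonempty by (auto simp: Perf_def)
    then obtain c0 where "c0 \<in> C'" using perfect_code_nonempty by blast
    then have "perfect_code s R R {y \<in> mat_space s R. mat_glue R y c0 \<in> C'}"
      using C' \<open>R < r\<close> by (simp add: perfect_code_restrict)
    moreover have "R < s * R" using assms by simp
    ultimately have "{y \<in> mat_space s R. mat_glue R y c0 \<in> C'} \<in> Perf s R R"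
      using assms by (simp add: perfect_code_in_Perf)
    then show ?thesis by blast
  qed
  show ?thesis using lift restrict by (meson lessI)
qed

end
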